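(* Let $r\ge3$, $n=2^r$, $m=2^{r-2}$ and $N=m$, so that $\Psi_n(x)=V_m(x)$. Let $p(x),q(x)\in\mathbb Z[x]$ have degree at most $m-1$, written $p=\sum_{i<m}a_iV_i$, $q=\sum_{i<m}b_iV_i$, and let $\overline r(x)=\sum_{i<m}c_iV_i(x)$ be the residue of $p(x)q(x)$ modulo $\Psi_n(x)$. Then $$\mathbf c=\frac4N\,\mathsf{IDCT}\big(\mathsf{DCT}(\mathbf a)\odot\mathsf{DCT}(\mathbf b)\big),$$ where $\mathbf a,\mathbf b,\mathbf c$ are the coefficient vectors and $\odot$ is the componentwise product.
   Context: $V_0(x)=1$, $V_i(x)=2T_i(x/2)$ for $i\ge1$ ($T_i$ the Chebyshev polynomial of the first kind). $\Psi_n$ is the minimal polynomial of $2\cos(2\pi/n)$. For $\mathbf a\in\mathbb R^N$: $\mathsf{DCT}(\mathbf a)_j=\frac{a_0}{2}+\sum_{i=1}^{N-1}a_i\cos\!\left(\frac{2\pi(2j+1)i}{4N}\right)$ and $\mathsf{IDCT}(\mathbf a)_j=\sum_{i=0}^{N-1}a_i\cos\!\left(\frac{2\pi(2i+1)j}{4N}\right)$, $0\le j\le N-1$. *)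

theory Defs
  imports Complex_Main "HOL-Computational_Algebra.Polynomial"
begin

fun cheb_T :: "nat \<Rightarrow> real poly" where
  "cheb_T 0 = 1"
| "cheb_T (Suc 0) = [:0, 1:]"
| "cheb_T (Suc (Suc k)) = [:0, 2:] * cheb_T (Suc k) - cheb_T k"

definition V :: "nat \<Rightarrow> real poly" where
  "V i = (if i = 0 then 1 else smult 2 (pcompose (cheb_T i) [:0, 1/2:]))"

definition min_poly_rat :: "real \<Rightarrow> rat poly" where
  "min_poly_rat \<alpha> = (THE p. lead_coeff p = 1 \<and> poly (map_poly of_rat p) \<alpha> = 0 \<and>
      (\<forall>q. q \<noteq> 0 \<and> poly (map_poly of_rat q) \<alpha> = 0 \<longrightarrow> degree p \<le> degree q))"

definition Psi :: "nat \<Rightarrow> rat poly" where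
  "Psi n = min_poly_rat (2 * cos (2 * pi / real n))"

definition DCT :: "nat \<Rightarrow> (nat \<Rightarrow> real) \<Rightarrow> nat \<Rightarrow> real" where
  "DCT N a j = a 0 / 2 + (\<Sum>i\<in>{1..<N}. a i * cos (2 * pi * real (2 * j + 1) * real i / (4 * real N)))"

definition IDCT :: "nat \<Rightarrow> (nat \<Rightarrow> real) \<Rightarrow> nat \<Rightarrow> real" where
  "IDCT N a j = (\<Sum>i<N. a i * cos (2 * pi * real (2 * i + 1) * real j / (4 * real N)))"

end

theory Submission
  imports Defs "Berlekamp_Zassenhaus.Factor_Bound"
begin

text \<open>
  Put \<open>\<theta>_t = (2t+1)\<pi>/(2m)\<close> for \<open>t < m\<close>. As \<open>V_i(2 cos \<theta>) = 2 cos(i\<theta>)\<close> for \<open>i > 0\<close>,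
  the polynomial \<open>V_m\<close> vanishes at the nodes \<open>2 cos \<theta>_t\<close>. There the remainder of \<open>p q\<close>
  modulo \<open>V_m\<close> therefore takes the value \<open>p(2 cos \<theta>_t) q(2 cos \<theta>_t) = 4 DCT(a)_t DCT(b)_t\<close>,
  while its \<open>V\<close>-expansion gives \<open>\<Sum>_i c_i w_i cos(i\<theta>_t)\<close> with \<open>w_0 = 1\<close> and \<open>w_i = 2\<close>
  otherwise. Orthogonality of the vectors \<open>(cos(i\<theta>_t))_{t<m}\<close>, \<open>i < m\<close>, inverts this.

  It remains to show \<open>\<Psi>_n = V_m\<close>, i.e. that \<open>V(2^(j+1))\<close>, which vanishes at
  \<open>2 cos(\<pi>/2^(j+2))\<close>, is irreducible over \<open>\<rat>\<close>. As \<open>V(2k) = V(k)^2 - 2\<close>, \<open>V(2^j)\<close> is a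
  monic integer polynomial with even lower coefficients and, for \<open>j \<ge> 1\<close>, constant term
  \<open>\<plusminus>2\<close>, so Eisenstein's criterion at 2 and Gauss's lemma apply.
\<close>

hide_const (open) Module.module.smult UnivPoly.coeff

interpretation of_rat_poly_hom: map_poly_idom_hom "of_rat :: rat \<Rightarrow> 'a :: field_char_0" ..

lemma cheb_T_cos: "poly (cheb_T i) (cos t) = cos (real i * t)"
proof (induction i rule: cheb_T.induct)
  case (3 k)
  have "cos (real (Suc (Suc k)) * t) = 2 * cos t * cos (real (Suc k) * t) - cos (real k * t)"
  proof -
    have "real (Suc (Suc k)) * t = real (Suc k) * t + t" and "real k * t = real (Suc k) * t - t"
      by (simp_all add: algebra_simps)
    then show ?thesis by (simp only: cos_add cos_diff) simp
  qed
  then show ?case using 3 by (simp add: algebra_simps)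
qed simp_all

lemma V_cos: "poly (V i) (2 * cos t) = (if i = 0 then 1 else 2 * cos (real i * t))"
  by (simp add: V_def poly_pcompose cheb_T_cos)

lemma real_poly_eqI_cos:
  fixes p q :: "real poly"
  assumes "\<And>t. poly p (2 * cos t) = poly q (2 * cos t)"
  shows "p = q"
proof (rule ccontr)
  assume "p \<noteq> q"
  then have "finite {y. poly (p - q) y = 0}" by (intro poly_roots_finite) simp
  moreover have "{-2..2} \<subseteq> {y. poly (p - q) y = 0}"
  proof
    fix y :: real assume "y \<in> {-2..2}"
    then have "y = 2 * cos (arccos (y / 2))" by (simp add: cos_arccos)
    then show "y \<in> {y. poly (p - q) y = 0}" using assms[of "arccos (y / 2)"] by simp
  qed
  ultimately have "finite {-2..2 :: real}" using finite_subset by blast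
  then show False using infinite_Icc[of "-2 :: real" 2] by simp
qed

section \<open>Eisenstein's criterion\<close>

lemma prime_dvd_coeff_factor:
  fixes g h :: "'a :: {idom, normalization_semidom} poly"
  assumes p: "prime p" and dvd: "\<And>i. i < n \<Longrightarrow> p dvd coeff (g * h) i"
    and h0: "\<not> p dvd coeff h 0" and k: "k < n"
  shows "p dvd coeff g k"
  using k
proof (induction k rule: less_induct)
  case (less k)
  have "coeff (g * h) k = (\<Sum>i<k. coeff g i * coeff h (k - i)) + coeff g k * coeff h 0"
    by (simp add: coeff_mult lessThan_Suc_atMost[symmetric])
  moreover have "p dvd (\<Sum>i<k. coeff g i * coeff h (k - i))"
    using less by (intro dvd_sum) auto
  ultimately have "p dvd coeff g k * coeff h 0"
    using dvd[OF less.prems] by (metis dvd_add_right_iff)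
  then show ?case using p h0 by (simp add: prime_dvd_mult_iff)
qed

lemma eisenstein_factor_degree:
  fixes f g h :: "'a :: {idom, normalization_semidom} poly"
  assumes p: "prime p" and fgh: "f = g * h" and lead: "lead_coeff f = 1"
    and dvd: "\<And>k. k < degree f \<Longrightarrow> p dvd coeff f k" and sq: "\<not> p\<^sup>2 dvd coeff f 0"
  shows "degree g = 0 \<or> degree h = 0"
proof (rule ccontr)
  assume nonconst: "\<not> (degree g = 0 \<or> degree h = 0)"
  then have "g \<noteq> 0" "h \<noteq> 0" by auto
  then have "degree f = degree g + degree h" by (simp add: fgh degree_mult_eq)
  with nonconst have deg: "degree g < degree f" "degree h < degree f" by auto
  have "coeff f 0 = coeff g 0 * coeff h 0" by (simp add: fgh coeff_mult)
  then have "\<not> p dvd coeff h 0 \<or> \<not> p dvd coeff g 0"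
    using sq by (auto simp: power2_eq_square mult_dvd_mono)
  then have "p dvd lead_coeff g \<or> p dvd lead_coeff h"
  proof
    assume "\<not> p dvd coeff h 0"
    then show ?thesis using prime_dvd_coeff_factor[OF p _ _ deg(1)] dvd fgh by blast
  next
    assume "\<not> p dvd coeff g 0"
    moreover have "f = h * g" by (simp add: fgh mult.commute)
    ultimately show ?thesis using prime_dvd_coeff_factor[OF p _ _ deg(2)] dvd by blast
  qed
  moreover have "lead_coeff g * lead_coeff h = 1" using lead by (simp add: fgh lead_coeff_mult)
  ultimately have "p dvd 1" by (metis dvd_mult2 dvd_mult)
  then show False using p not_prime_unit by blast
qed

lemma eisenstein_factor_degree_rat:
  fixes f :: "int poly" and g h :: "rat poly" and p :: int
  assumes "prime p" and "map_poly of_int f = g * h" and "lead_coeff f = 1"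
    and "\<And>k. k < degree f \<Longrightarrow> p dvd coeff f k" and "\<not> p\<^sup>2 dvd coeff f 0"
  shows "degree g = 0 \<or> degree h = 0"
proof -
  obtain g' h' where fgh: "f = g' * h'" and "degree g' = degree g" "degree h' = degree h"
    using rat_to_int_factor[OF assms(2)] by blast
  then show ?thesis using eisenstein_factor_degree[OF assms(1) fgh assms(3-5)] by simp
qed

section \<open>The integer polynomials \<open>V (2 ^ j)\<close>\<close>

fun V_pow2_int :: "nat \<Rightarrow> int poly" where
  "V_pow2_int 0 = [:0, 1:]"
| "V_pow2_int (Suc j) = V_pow2_int j ^ 2 - [:2:]"

lemma V_pow2_int_cos:
  "poly (map_poly real_of_int (V_pow2_int j)) (2 * cos t) = 2 * cos (2 ^ j * t)"
proof (induction j arbitrary: t)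
  case (Suc j)
  have "poly (map_poly real_of_int (V_pow2_int (Suc j))) (2 * cos t) = (2 * cos (2 ^ j * t))\<^sup>2 - 2"
    using Suc by (simp add: of_int_poly_hom.hom_power of_int_poly_hom.hom_minus)
  also have "\<dots> = 2 * cos (2 ^ Suc j * t)"
    by (simp add: cos_double_cos power2_eq_square mult.assoc)
  finally show ?case .
qed simp

lemma of_int_V_pow2_int: "map_poly of_int (V_pow2_int j) = V (2 ^ j)"
  by (rule real_poly_eqI_cos) (simp add: V_pow2_int_cos V_cos)

lemma V_pow2_int_monic: "degree (V_pow2_int j) = 2 ^ j \<and> lead_coeff (V_pow2_int j) = 1"
proof (induction j)
  case (Suc j)
  let ?P = "V_pow2_int j ^ 2"
  have "V_pow2_int j \<noteq> 0" using Suc by auto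
  then have dP: "degree ?P = 2 ^ Suc j" using Suc by (simp add: degree_power_eq)
  have "lead_coeff ?P = 1" using Suc by (metis lead_coeff_power power_one)
  moreover have "degree (?P - [:2:]) = 2 ^ Suc j"
    unfolding diff_conv_add_uminus using dP by (subst degree_add_eq_left) simp_all
  ultimately show ?case using dP by (simp add: coeff_pCons split: nat.split)
qed simp

lemma V_pow2_int_coeff_even: "k < 2 ^ j \<Longrightarrow> even (coeff (V_pow2_int j) k)"
proof (induction j arbitrary: k)
  case (Suc j)
  let ?c = "coeff (V_pow2_int j)"
  have "even (?c i * ?c (k - i))" if "i \<le> k" for i
    using Suc that by (cases "i < 2 ^ j") auto
  then have "even (coeff (V_pow2_int j ^ 2) k)"
    by (auto simp: power2_eq_square coeff_mult intro: dvd_sum)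
  then show ?case by (cases k) auto
qed simp

lemma V_pow2_int_coeff_0: "coeff (V_pow2_int (Suc j)) 0 = (if j = 0 then -2 else 2)"
  by (induction j) (simp_all add: coeff_0_power)

lemma V_pow2_int_irreducible_rat:
  fixes g h :: "rat poly"
  assumes "map_poly of_int (V_pow2_int (Suc j)) = g * h"
  shows "degree g = 0 \<or> degree h = 0"
proof (rule eisenstein_factor_degree_rat[OF _ assms, of 2])
  show "prime (2 :: int)" by simp
  show "lead_coeff (V_pow2_int (Suc j)) = 1" using V_pow2_int_monic by blast
  show "2 dvd coeff (V_pow2_int (Suc j)) k" if "k < degree (V_pow2_int (Suc j))" for k
    using that V_pow2_int_monic V_pow2_int_coeff_even by metis
  show "\<not> 2\<^sup>2 dvd coeff (V_pow2_int (Suc j)) 0"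
    by (simp add: V_pow2_int_coeff_0 del: V_pow2_int.simps)
qed

lemma degree_le_if_common_root:
  fixes P q :: "rat poly" and x :: real
  assumes irr: "\<And>g h. P = g * h \<Longrightarrow> degree g = 0 \<or> degree h = 0"
    and P: "poly (map_poly of_rat P) x = 0" and q: "q \<noteq> 0" "poly (map_poly of_rat q) x = 0"
  shows "degree P \<le> degree q"
proof (cases "P = 0")
  case False
  define g where "g = gcd q P"
  have "g = fst (bezout_coefficients q P) * q + snd (bezout_coefficients q P) * P"
    unfolding g_def by (simp add: bezout_coefficients_fst_snd)
  then have g_root: "poly (map_poly of_rat g) x = 0"
    using P q by (simp add: of_rat_poly_hom.hom_add of_rat_poly_hom.hom_mult)
  have "g \<noteq> 0" using q by (simp add: g_def)
  have "degree g \<noteq> 0"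
  proof
    assume "degree g = 0"
    then obtain c where "g = [:c:]" by (metis degree_0_id)
    then show False using g_root \<open>g \<noteq> 0\<close> by (simp add: of_rat_hom.map_poly_pCons_hom)
  qed
  obtain h where Pgh: "P = g * h" using dvd_def[of g P] by (auto simp: g_def)
  then have "degree h = 0" using irr[OF Pgh] \<open>degree g \<noteq> 0\<close> by simp
  with False Pgh have "degree P = degree g" by (simp add: degree_mult_eq)
  also have "degree g \<le> degree q" by (rule dvd_imp_degree_le) (simp_all add: g_def q)
  finally show ?thesis .
qed simp

lemma min_poly_rat_eqI:
  fixes P :: "rat poly" and x :: real
  assumes lead: "lead_coeff P = 1" and root: "poly (map_poly of_rat P) x = 0"
    and irr: "\<And>g h. P = g * h \<Longrightarrow> degree g = 0 \<or> degree h = 0"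
  shows "min_poly_rat x = P"
  unfolding min_poly_rat_def
proof (rule the_equality)
  have minimal: "degree P \<le> degree q" if "q \<noteq> 0" "poly (map_poly of_rat q) x = 0" for q
    using degree_le_if_common_root[OF irr root that] .
  then show "lead_coeff P = 1 \<and> poly (map_poly of_rat P) x = 0 \<and>
      (\<forall>q. q \<noteq> 0 \<and> poly (map_poly of_rat q) x = 0 \<longrightarrow> degree P \<le> degree q)"
    using lead root by blast
  fix p assume p: "lead_coeff p = 1 \<and> poly (map_poly of_rat p) x = 0 \<and>
      (\<forall>q. q \<noteq> 0 \<and> poly (map_poly of_rat q) x = 0 \<longrightarrow> degree p \<le> degree q)"
  have "P \<noteq> 0" "p \<noteq> 0" using lead p by auto
  then have deg: "degree p = degree P" using p root minimal by (meson antisym)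
  show "p = P"
  proof (rule ccontr)
    assume "p \<noteq> P"
    moreover have "poly (map_poly of_rat (p - P)) x = 0"
      using p root by (simp add: of_rat_poly_hom.hom_minus)
    ultimately have "degree P \<le> degree (p - P)" using minimal by simp
    moreover have "degree (p - P) < degree P"
    proof (rule degree_lessI)
      show "\<forall>k\<ge>degree P. coeff (p - P) k = 0"
        using deg lead p by (auto simp: coeff_eq_0 le_less)
    qed (use \<open>p \<noteq> P\<close> in auto)
    ultimately show False by simp
  qed
qed

section \<open>Discrete cosine transform\<close>

definition dct_angle :: "nat \<Rightarrow> nat \<Rightarrow> real" where
  "dct_angle m t = pi * real (2 * t + 1) / (2 * real m)"

lemma dct_angle_arg:
  "m > 0 \<Longrightarrow> 2 * pi * real (2 * t + 1) * real i / (4 * real m) = real i * dct_angle m t"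
  by (simp add: dct_angle_def field_simps)

lemma V_root_dct_angle: "m > 0 \<Longrightarrow> poly (V m) (2 * cos (dct_angle m t)) = 0"
proof -
  assume "m > 0"
  then have "real m * dct_angle m t = of_int (int (2 * t + 1)) * (pi / 2)"
    by (simp add: dct_angle_def field_simps)
  then have "cos (real m * dct_angle m t) = 0"
    unfolding cos_zero_iff_int by (intro exI[of _ "int (2 * t + 1)"]) simp
  then show ?thesis using \<open>m > 0\<close> by (simp add: V_cos)
qed

lemma sum_cos_dct_angle_eq_0:
  fixes l :: int
  assumes l0: "l \<noteq> 0" and lm: "\<bar>l\<bar> < 2 * int m"
  shows "(\<Sum>t<m. cos (of_int l * dct_angle m t)) = 0"
proof -
  have m0: "m > 0" using lm l0 by linarith
  define \<phi> where "\<phi> = of_int l * pi / (2 * real m)"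
  have "sin \<phi> \<noteq> 0"
  proof
    assume "sin \<phi> = 0"
    then have "of_int l / (2 * real m) \<in> \<int>"
      using sin_times_pi_eq_0[of "of_int l / (2 * real m)"] by (simp add: \<phi>_def)
    then obtain i where "of_int l / (2 * real m) = of_int i" by (auto elim: Ints_cases)
    then have "(of_int l :: real) = of_int (2 * int m * i)" using m0 by (simp add: field_simps)
    then have l: "l = 2 * int m * i" by (simp only: of_int_eq_iff)
    then have "i \<noteq> 0" using l0 by auto
    then have "\<bar>l\<bar> \<ge> 2 * int m" using m0 by (simp add: l abs_mult)
    then show False using lm by simp
  qed
  have telescoping: "2 * sin \<phi> * cos (of_int l * dct_angle m t)
      = sin (real (2 * Suc t) * \<phi>) - sin (real (2 * t) * \<phi>)" for t
  proof -
    have "of_int l * dct_angle m t = real (2 * t + 1) * \<phi>"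
      by (simp add: dct_angle_def \<phi>_def field_simps)
    moreover have "\<phi> + real (2 * t + 1) * \<phi> = real (2 * Suc t) * \<phi>"
      and "\<phi> - real (2 * t + 1) * \<phi> = - (real (2 * t) * \<phi>)" by (simp_all add: algebra_simps)
    ultimately show ?thesis using sin_times_cos[of \<phi> "real (2 * t + 1) * \<phi>"] by simp
  qed
  have "2 * sin \<phi> * (\<Sum>t<m. cos (of_int l * dct_angle m t)) = sin (real (2 * m) * \<phi>) - sin 0"
    unfolding sum_distrib_left telescoping by (subst sum_lessThan_telescope) simp
  also have "\<dots> = sin (of_int l * pi)" using m0 by (simp add: \<phi>_def)
  also have "\<dots> = 0" by (simp add: sin_times_pi_eq_0)
  finally show ?thesis using \<open>sin \<phi> \<noteq> 0\<close> by simp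
qed

lemma sum_cos_dct_angle_orthogonal:
  assumes "i < m" "k < m"
  shows "(\<Sum>t<m. cos (real i * dct_angle m t) * cos (real k * dct_angle m t)) =
     (if i \<noteq> k then 0 else if k = 0 then real m else real m / 2)"
proof -
  define S where "S l = (\<Sum>t<m. cos (of_int l * dct_angle m t))" for l :: int
  have "(\<Sum>t<m. cos (real i * dct_angle m t) * cos (real k * dct_angle m t)) =
      (\<Sum>t<m. (cos (of_int (int i - int k) * dct_angle m t) + cos (of_int (int i + int k) * dct_angle m t)) / 2)"
    by (rule sum.cong) (simp_all add: cos_times_cos algebra_simps)
  also have "\<dots> = (S (int i - int k) + S (int i + int k)) / 2"
    unfolding S_def sum.distrib[symmetric] sum_divide_distrib[symmetric] ..
  finally have eq: "(\<Sum>t<m. cos (real i * dct_angle m t) * cos (real k * dct_angle m t)) =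
      (S (int i - int k) + S (int i + int k)) / 2" .
  have "S 0 = real m" by (simp add: S_def)
  moreover have "S l = 0" if "l \<noteq> 0" "\<bar>l\<bar> < 2 * int m" for l
    unfolding S_def using that by (rule sum_cos_dct_angle_eq_0)
  ultimately show ?thesis using eq assms by auto
qed

lemma dct_inversion:
  fixes c :: "nat \<Rightarrow> real"
  assumes "k < m"
  shows "(\<Sum>t<m. (\<Sum>i<m. c i * (if i = 0 then 1 else 2) * cos (real i * dct_angle m t))
                * cos (real k * dct_angle m t)) = real m * c k"
proof -
  have "(\<Sum>t<m. (\<Sum>i<m. c i * (if i = 0 then 1 else 2) * cos (real i * dct_angle m t))
                * cos (real k * dct_angle m t))
      = (\<Sum>i<m. c i * (if i = 0 then 1 else 2) *
                (\<Sum>t<m. cos (real i * dct_angle m t) * cos (real k * dct_angle m t)))"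
    unfolding sum_distrib_right sum_distrib_left by (subst sum.swap) (simp add: mult.assoc)
  also have "\<dots> = (\<Sum>i<m. if i = k then real m * c k else 0)"
    using assms by (intro sum.cong) (simp_all add: sum_cos_dct_angle_orthogonal)
  also have "\<dots> = real m * c k" using assms by simp
  finally show ?thesis .
qed

lemma V_expansion_at_dct_node:
  "(\<Sum>i<m. f i * poly (V i) (2 * cos (dct_angle m t))) =
   (\<Sum>i<m. f i * (if i = 0 then 1 else 2) * cos (real i * dct_angle m t))"
  by (rule sum.cong) (simp_all add: V_cos)

lemma V_expansion_at_dct_node_eq_DCT:
  assumes "m > 0"
  shows "(\<Sum>i<m. f i * poly (V i) (2 * cos (dct_angle m t))) = 2 * DCT m f t"
proof -
  have "(\<Sum>i<m. f i * (if i = 0 then 1 else 2) * cos (real i * dct_angle m t))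
      = f 0 + (\<Sum>i\<in>{1..<m}. 2 * (f i * cos (real i * dct_angle m t)))"
    using assms by (simp add: lessThan_atLeast0 sum.atLeast_Suc_lessThan mult.commute mult.left_commute)
  then show ?thesis
    unfolding V_expansion_at_dct_node DCT_def dct_angle_arg[OF assms]
    by (simp add: sum_distrib_left)
qed

lemma V_expansion_mult_mod_eq_IDCT:
  fixes a b c :: "nat \<Rightarrow> real" and P Q :: "real poly"
  assumes m: "m > 0"
    and P: "P = (\<Sum>i<m. smult (a i) (V i))" and Q: "Q = (\<Sum>i<m. smult (b i) (V i))"
    and PQ: "P * Q mod V m = (\<Sum>i<m. smult (c i) (V i))"
    and k: "k < m"
  shows "c k = 4 / real m * IDCT m (\<lambda>i. DCT m a i * DCT m b i) k"
proof -
  have node: "(\<Sum>i<m. c i * (if i = 0 then 1 else 2) * cos (real i * dct_angle m t))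
      = 4 * (DCT m a t * DCT m b t)" for t
  proof -
    let ?x = "2 * cos (dct_angle m t)"
    have "(\<Sum>i<m. c i * poly (V i) ?x) = poly (P * Q mod V m) ?x"
      by (simp add: PQ poly_sum)
    also have "\<dots> = poly P ?x * poly Q ?x"
      using V_root_dct_angle[OF m] by (simp add: poly_mod)
    also have "\<dots> = 2 * DCT m a t * (2 * DCT m b t)"
      using V_expansion_at_dct_node_eq_DCT[OF m] by (simp add: P Q poly_sum)
    finally show ?thesis by (simp add: V_expansion_at_dct_node)
  qed
  have "real m * c k = (\<Sum>t<m. 4 * (DCT m a t * DCT m b t) * cos (real k * dct_angle m t))"
    unfolding dct_inversion[OF k, symmetric] node ..
  also have "\<dots> = 4 * IDCT m (\<lambda>i. DCT m a i * DCT m b i) k"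
    unfolding IDCT_def dct_angle_arg[OF m] sum_distrib_left by (simp add: mult.assoc)
  finally show ?thesis using m by (simp add: field_simps)
qed

lemma Psi_pow2: "map_poly of_rat (Psi (2 ^ (j + 3))) = V (2 ^ (j + 1))"
proof -
  define P where "P = map_poly rat_of_int (V_pow2_int (Suc j))"
  have "map_poly (of_rat :: rat \<Rightarrow> real) P = map_poly of_int (V_pow2_int (Suc j))"
    by (simp add: P_def map_poly_map_poly o_def del: V_pow2_int.simps)
  then have P_real: "map_poly of_rat P = V (2 ^ (j + 1))"
    using of_int_V_pow2_int[of "Suc j"] by simp
  have "2 * pi / real (2 ^ (j + 3)) = dct_angle (2 ^ (j + 1)) 0"
    by (simp add: dct_angle_def power_add field_simps)
  moreover have "min_poly_rat (2 * cos (dct_angle (2 ^ (j + 1)) 0)) = P"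
  proof (rule min_poly_rat_eqI)
    show "lead_coeff P = 1" using V_pow2_int_monic[of "Suc j"]
      by (auto simp: P_def degree_map_poly coeff_map_poly simp del: V_pow2_int.simps)
    show "poly (map_poly of_rat P) (2 * cos (dct_angle (2 ^ (j + 1)) 0)) = 0"
      by (simp add: P_real V_root_dct_angle)
    show "degree g = 0 \<or> degree h = 0" if "P = g * h" for g h
      using V_pow2_int_irreducible_rat that by (simp add: P_def)
  qed
  ultimately show ?thesis by (simp add: Psi_def P_real)
qed

theorem mainTheorem8:
  fixes r n m N :: nat and p q :: "int poly" and a b c :: "nat \<Rightarrow> real"
  assumes "r \<ge> 3" and "n = 2 ^ r" and "m = 2 ^ (r - 2)" and "N = m"
    and "degree p \<le> m - 1" and "degree q \<le> m - 1"
    and "map_poly of_int p = (\<Sum>i<m. smult (a i) (V i))"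
    and "map_poly of_int q = (\<Sum>i<m. smult (b i) (V i))"
    and "map_poly of_int (p * q) mod map_poly of_rat (Psi n) = (\<Sum>i<m. smult (c i) (V i))"
  shows "\<forall>j<N. c j = 4 / real N * IDCT N (\<lambda>i. DCT N a i * DCT N b i) j"
proof -
  obtain j where "r = j + 3" using \<open>r \<ge> 3\<close> by (metis le_add_diff_inverse2)
  then have "map_poly of_rat (Psi n) = V m"
    using assms(2,3) Psi_pow2[of j] by (simp add: numeral_3_eq_3)
  then have "map_poly of_int p * map_poly of_int q mod V m = (\<Sum>i<m. smult (c i) (V i))"
    using assms(9) by (simp add: of_int_poly_hom.hom_mult)
  moreover have "m > 0" using assms(3) by simp
  ultimately show ?thesis
    using V_expansion_mult_mod_eq_IDCT assms(4,7,8) by blast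
qed

end
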